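(* Let $R$ and $R'$ be (not necessarily commutative) subrings of a $\mathbb Q$-algebra, let $\Gamma$ be an order of a number field, let $d\ge1$ be an integer and $\Gamma'=\mathbb Z[d\Gamma]$. Suppose $dR\subseteq R'$ and $R'\subseteq R$. Then the number of $\Gamma$-structures on $R$ is at most the number of $\Gamma'$-structures on $R'$.
   Context: For rings $A,B$, $\operatorname{Hom}(A,B)$ is the set of ring morphisms $A\to B$, with $B^\times$ acting by conjugation; an $A$-structure on $B$ is an element of $\operatorname{Hom}(A,B)/B^\times$. *)

theory Defs
  imports Complex_Main
begin

definition subring_set :: "'a::ring_1 set \<Rightarrow> bool" where
  "subring_set S \<longleftrightarrow> 1 \<in> S \<and> (\<forall>x\<in>S. \<forall>y\<in>S. x + y \<in> S \<and> x * y \<in> S) \<and> (\<forall>x\<in>S. - x \<in> S)"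

(* A unital ring A is a Q-algebra iff every positive integer is a unit
   (the map Q -> A is then unique and central). *)
definition Q_algebra :: "'a::ring_1 itself \<Rightarrow> bool" where
  "Q_algebra _ \<longleftrightarrow> (\<forall>n::nat. n > 0 \<longrightarrow> (\<exists>y::'a. of_nat n * y = 1 \<and> y * of_nat n = 1))"

definition number_field :: "'k::field_char_0 itself \<Rightarrow> bool" where
  "number_field _ \<longleftrightarrow> (\<exists>B::'k set. finite B \<and>
      (\<forall>x::'k. \<exists>c. x = (\<Sum>b\<in>B. of_rat (c b) * b)))"

definition is_order :: "'k::field_char_0 set \<Rightarrow> bool" where
  "is_order Ord \<longleftrightarrow> subring_set Ord \<and>
     (\<exists>G. finite G \<and> G \<subseteq> Ord \<and> Ord = {(\<Sum>g\<in>G. of_int (c g) * g) | c. True}) \<and>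
     (\<forall>x::'k. \<exists>G c. finite G \<and> G \<subseteq> Ord \<and> x = (\<Sum>g\<in>G. of_rat (c g) * g))"

definition gen_subring :: "'a::ring_1 set \<Rightarrow> 'a set" where
  "gen_subring S = \<Inter>{T. subring_set T \<and> S \<subseteq> T}"

definition ring_homs :: "'k::ring_1 set \<Rightarrow> 'a::ring_1 set \<Rightarrow> ('k \<Rightarrow> 'a) set" where
  "ring_homs G R = {f. (\<forall>x\<in>G. f x \<in> R) \<and> f 1 = 1 \<and>
      (\<forall>x\<in>G. \<forall>y\<in>G. f (x + y) = f x + f y \<and> f (x * y) = f x * f y) \<and>
      (\<forall>x. x \<notin> G \<longrightarrow> f x = undefined)}"

definition conj_rel :: "'k::ring_1 set \<Rightarrow> 'a::ring_1 set \<Rightarrow> (('k \<Rightarrow> 'a) \<times> ('k \<Rightarrow> 'a)) set" where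
  "conj_rel G R = {(f, g). f \<in> ring_homs G R \<and> g \<in> ring_homs G R \<and>
      (\<exists>u\<in>R. \<exists>v\<in>R. u * v = 1 \<and> v * u = 1 \<and> (\<forall>x\<in>G. g x = u * f x * v))}"

definition structures :: "'k::ring_1 set \<Rightarrow> 'a::ring_1 set \<Rightarrow> ('k \<Rightarrow> 'a) set set" where
  "structures G R = ring_homs G R // conj_rel G R"

end

theory Submission
  imports Defs "HOL-Library.FuncSet"
begin

text \<open>
  Restriction along \<open>\<Gamma>' \<subseteq> \<Gamma>\<close> sends \<open>Hom(\<Gamma>, R)\<close> to \<open>Hom(\<Gamma>', R')\<close>: a morphism \<open>f\<close> maps the
  generators \<open>d\<gamma>\<close> of \<open>\<Gamma>'\<close> to \<open>d f(\<gamma>) \<in> dR \<subseteq> R'\<close>. If two restrictions are conjugate by a unit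
  \<open>u\<close> of \<open>R'\<close>, then \<open>u\<close> is a unit of \<open>R\<close> and \<open>d g(\<gamma>) = g(d\<gamma>) = u f(d\<gamma>) u\<^sup>-\<^sup>1 = d u f(\<gamma>) u\<^sup>-\<^sup>1\<close>;
  since \<open>d\<close> is invertible in a \<open>\<rat>\<close>-algebra, \<open>f\<close> and \<open>g\<close> are conjugate. So restriction of a
  chosen representative embeds the \<open>\<Gamma>\<close>-structures on \<open>R\<close> into the \<open>\<Gamma>'\<close>-structures on \<open>R'\<close>.
\<close>

lemma subring_set_gen_subring: "subring_set (gen_subring S)"
  unfolding gen_subring_def subring_set_def by auto

lemma gen_subring_minimal: "subring_set T \<Longrightarrow> S \<subseteq> T \<Longrightarrow> gen_subring S \<subseteq> T"
  unfolding gen_subring_def by auto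

lemma subset_gen_subring: "S \<subseteq> gen_subring S"
  unfolding gen_subring_def by auto

lemma
  assumes "subring_set S"
  shows subring_set_one: "1 \<in> S"
    and subring_set_add: "x \<in> S \<Longrightarrow> y \<in> S \<Longrightarrow> x + y \<in> S"
    and subring_set_mult: "x \<in> S \<Longrightarrow> y \<in> S \<Longrightarrow> x * y \<in> S"
    and subring_set_uminus: "x \<in> S \<Longrightarrow> - x \<in> S"
  using assms unfolding subring_set_def by blast+

lemma subring_set_zero: "subring_set S \<Longrightarrow> 0 \<in> S"
  by (metis add.right_inverse subring_set_add subring_set_one subring_set_uminus)

lemma subring_set_of_nat_mult:
  assumes "subring_set S" "x \<in> S"
  shows "of_nat n * x \<in> S"
proof (induction n)
  case 0
  show ?case using subring_set_zero[OF assms(1)] by simp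
next
  case (Suc n)
  then have "x + of_nat n * x \<in> S" using assms by (simp add: subring_set_add)
  then show ?case by (simp add: distrib_right)
qed

lemma
  assumes "f \<in> ring_homs G R"
  shows ring_homs_in: "x \<in> G \<Longrightarrow> f x \<in> R"
    and ring_homs_one: "f 1 = 1"
    and ring_homs_add: "x \<in> G \<Longrightarrow> y \<in> G \<Longrightarrow> f (x + y) = f x + f y"
    and ring_homs_mult: "x \<in> G \<Longrightarrow> y \<in> G \<Longrightarrow> f (x * y) = f x * f y"
  using assms unfolding ring_homs_def by blast+

lemma ring_homs_zero:
  assumes "subring_set G" "f \<in> ring_homs G R"
  shows "f 0 = 0"
proof -
  have "f (0 + 0) = f 0 + f 0"
    using ring_homs_add[OF assms(2)] subring_set_zero[OF assms(1)] by blast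
  then show ?thesis by simp
qed

lemma ring_homs_uminus:
  assumes "subring_set G" "f \<in> ring_homs G R" "x \<in> G"
  shows "f (- x) = - f x"
proof -
  have "f (x + - x) = f x + f (- x)"
    using ring_homs_add[OF assms(2,3) subring_set_uminus[OF assms(1,3)]] .
  then have "f x + f (- x) = 0" using ring_homs_zero[OF assms(1,2)] by simp
  then show ?thesis by (simp add: add_eq_0_iff2)
qed

lemma ring_homs_of_nat_mult:
  assumes "subring_set G" "f \<in> ring_homs G R" "x \<in> G"
  shows "f (of_nat n * x) = of_nat n * f x"
proof (induction n)
  case 0
  show ?case using ring_homs_zero[OF assms(1,2)] by simp
next
  case (Suc n)
  have "f (x + of_nat n * x) = f x + f (of_nat n * x)"
    using ring_homs_add[OF assms(2)] subring_set_of_nat_mult[OF assms(1,3)] assms(3) by simp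
  then show ?case using Suc by (simp add: distrib_right)
qed

lemma subring_set_ring_homs_preimage:
  assumes "subring_set G" "subring_set R'" "f \<in> ring_homs G R"
  shows "subring_set {x \<in> G. f x \<in> R'}"
  using assms
  by (auto simp: subring_set_def[of "{x \<in> G. f x \<in> R'}"] subring_set_one subring_set_add
      subring_set_mult subring_set_uminus ring_homs_one ring_homs_add ring_homs_mult
      ring_homs_uminus)

lemma restrict_in_ring_homs:
  assumes "subring_set G'" "G' \<subseteq> G" "f \<in> ring_homs G R" "f ` G' \<subseteq> R'"
  shows "restrict f G' \<in> ring_homs G' R'"
  using assms subring_set_one[OF assms(1)] subring_set_add[OF assms(1)]
    subring_set_mult[OF assms(1)] ring_homs_one[OF assms(3)] ring_homs_add[OF assms(3)]
    ring_homs_mult[OF assms(3)]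
  unfolding ring_homs_def[of G'] by (auto simp: subset_iff)

lemma restrict_gen_subring_in_ring_homs:
  assumes "subring_set G" "subring_set R'" "f \<in> ring_homs G R" "S \<subseteq> G" "f ` S \<subseteq> R'"
  shows "restrict f (gen_subring S) \<in> ring_homs (gen_subring S) R'"
proof -
  have "gen_subring S \<subseteq> {x \<in> G. f x \<in> R'}"
    using assms by (intro gen_subring_minimal subring_set_ring_homs_preimage) auto
  then show ?thesis
    using subring_set_gen_subring assms(3) by (intro restrict_in_ring_homs) auto
qed

lemma equiv_conj_rel:
  assumes "subring_set R"
  shows "equiv (ring_homs G R) (conj_rel G R)"
proof (rule equivI)
  show "conj_rel G R \<subseteq> ring_homs G R \<times> ring_homs G R"
    unfolding conj_rel_def by auto
  from subring_set_one[OF assms] show "refl_on (ring_homs G R) (conj_rel G R)"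
    unfolding refl_on_def conj_rel_def by force
  show "sym (conj_rel G R)"
  proof (rule symI)
    fix f g assume "(f, g) \<in> conj_rel G R"
    then obtain u v where uv: "u \<in> R" "v \<in> R" "u * v = 1" "v * u = 1"
        "\<forall>x\<in>G. g x = u * f x * v" and fg: "f \<in> ring_homs G R" "g \<in> ring_homs G R"
      unfolding conj_rel_def by blast
    have "f x = v * g x * u" if "x \<in> G" for x
    proof -
      have "v * g x * u = (v * u) * f x * (v * u)" using uv(5) that by (simp add: mult.assoc)
      then show ?thesis using uv(4) by simp
    qed
    then show "(g, f) \<in> conj_rel G R" unfolding conj_rel_def using uv fg by blast
  qed
  show "trans (conj_rel G R)"
  proof (rule transI)
    fix f g h assume "(f, g) \<in> conj_rel G R" "(g, h) \<in> conj_rel G R"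
    then obtain u v u' v' where uv: "u \<in> R" "v \<in> R" "u * v = 1" "v * u = 1"
        "\<forall>x\<in>G. g x = u * f x * v"
      and uv': "u' \<in> R" "v' \<in> R" "u' * v' = 1" "v' * u' = 1" "\<forall>x\<in>G. h x = u' * g x * v'"
      and fh: "f \<in> ring_homs G R" "h \<in> ring_homs G R"
      unfolding conj_rel_def by blast
    have "u' * u \<in> R" "v * v' \<in> R" using uv uv' subring_set_mult[OF assms] by auto
    moreover have "(u' * u) * (v * v') = 1" "(v * v') * (u' * u) = 1"
      by (metis mult.assoc mult_1_left uv(3) uv'(3), metis mult.assoc mult_1_left uv(4) uv'(4))
    moreover have "\<forall>x\<in>G. h x = (u' * u) * f x * (v * v')"
      using uv(5) uv'(5) by (simp add: mult.assoc)
    ultimately show "(f, h) \<in> conj_rel G R" unfolding conj_rel_def using fh by blast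
  qed
qed

lemma Q_algebra_of_nat_mult_cancel:
  assumes "Q_algebra TYPE('a::ring_1)" "n > 0" "of_nat n * a = (of_nat n * b :: 'a)"
  shows "a = b"
proof -
  obtain y :: 'a where y: "y * of_nat n = 1"
    using assms(1,2) unfolding Q_algebra_def by blast
  have "(y * of_nat n) * a = (y * of_nat n) * b" using assms(3) by (simp add: mult.assoc)
  then show ?thesis using y by simp
qed

text \<open>
  The conjugating unit is only known to lie in \<open>R'\<close>, which suffices since \<open>R' \<subseteq> R\<close>; the
  converse fails, which is why restriction is not well defined on conjugacy classes.
\<close>
lemma conj_rel_of_conj_rel_restrict:
  assumes "Q_algebra TYPE('a::ring_1)" "d > 0" "subring_set G" "R' \<subseteq> R"
    and "\<And>x. x \<in> G \<Longrightarrow> of_nat d * x \<in> G'"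
    and f: "f \<in> ring_homs G R" and g: "g \<in> ring_homs G R"
    and "(restrict f G', restrict g G') \<in> conj_rel G' (R' :: 'a set)"
  shows "(f, g) \<in> conj_rel G R"
proof -
  obtain u v where uv: "u \<in> R'" "v \<in> R'" "u * v = 1" "v * u = 1"
      and conj: "\<forall>x\<in>G'. restrict g G' x = u * restrict f G' x * v"
    using assms(8) unfolding conj_rel_def by blast
  have "g x = u * f x * v" if x: "x \<in> G" for x
  proof (rule Q_algebra_of_nat_mult_cancel[OF assms(1,2)])
    have "of_nat d * g x = g (of_nat d * x)"
      using ring_homs_of_nat_mult[OF assms(3) g x] by simp
    also have "\<dots> = u * f (of_nat d * x) * v" using conj assms(5)[OF x] by simp
    also have "\<dots> = u * (of_nat d * f x) * v"
      using ring_homs_of_nat_mult[OF assms(3) f x] by simp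
    also have "\<dots> = of_nat d * (u * f x * v)" by (metis mult.assoc mult_of_nat_commute)
    finally show "of_nat d * g x = of_nat d * (u * f x * v)" .
  qed
  then show ?thesis using f g uv assms(4) unfolding conj_rel_def by blast
qed

lemma inj_quotient_of_reflecting:
  fixes A :: "'a set" and B :: "'b set"
  assumes "equiv A r" "equiv B s" "h \<in> A \<rightarrow> B"
    and "\<And>a b. a \<in> A \<Longrightarrow> b \<in> A \<Longrightarrow> (h a, h b) \<in> s \<Longrightarrow> (a, b) \<in> r"
  shows "\<exists>\<phi>. inj_on \<phi> (A // r) \<and> \<phi> ` (A // r) \<subseteq> B // s"
proof -
  have class_of_member: "X = r `` {b}" if X: "X \<in> A // r" and b: "b \<in> X" for X b
  proof -
    obtain a where a: "a \<in> A" "X = r `` {a}" using X by (rule quotientE)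
    then have "(a, b) \<in> r" using b by simp
    then have "r `` {a} = r `` {b}" by (rule equiv_class_eq[OF assms(1)])
    with a(2) show ?thesis by simp
  qed
  define rep where "rep X = (SOME a. a \<in> X)" for X :: "'a set"
  have rep: "rep X \<in> A" "X = r `` {rep X}" if X: "X \<in> A // r" for X
  proof -
    have "rep X \<in> X"
      using in_quotient_imp_non_empty[OF assms(1) X] unfolding rep_def by (simp add: some_in_eq)
    then show "rep X \<in> A" "X = r `` {rep X}"
      using in_quotient_imp_subset[OF assms(1) X] class_of_member[OF X] by auto
  qed
  have "inj_on (\<lambda>X. s `` {h (rep X)}) (A // r)"
  proof (rule inj_onI)
    fix X Y assume X: "X \<in> A // r" and Y: "Y \<in> A // r"
      and eq: "s `` {h (rep X)} = s `` {h (rep Y)}"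
    have "h (rep Y) \<in> B" using assms(3) rep(1)[OF Y] by blast
    with eq assms(2) have "(h (rep X), h (rep Y)) \<in> s" by (rule eq_equiv_class)
    then have "(rep X, rep Y) \<in> r" using assms(4) rep(1)[OF X] rep(1)[OF Y] by blast
    then have "r `` {rep X} = r `` {rep Y}" by (rule equiv_class_eq[OF assms(1)])
    then show "X = Y" using rep(2)[OF X, symmetric] rep(2)[OF Y, symmetric] by (simp only:)
  qed
  moreover have "s `` {h (rep X)} \<in> B // s" if "X \<in> A // r" for X
    using assms(3) rep(1)[OF that] by (blast intro: quotientI)
  ultimately show ?thesis by blast
qed

theorem lemma10p10:
  fixes R R' :: "'a::ring_1 set" and \<Gamma> :: "'k::field_char_0 set" and d :: nat
  assumes "Q_algebra TYPE('a)"
    and "subring_set R" and "subring_set R'"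
    and "number_field TYPE('k)" and "is_order \<Gamma>"
    and "d \<ge> 1"
    and "(\<lambda>r. of_nat d * r) ` R \<subseteq> R'" and "R' \<subseteq> R"
  shows "\<exists>\<phi>. inj_on \<phi> (structures \<Gamma> R) \<and>
           \<phi> ` structures \<Gamma> R \<subseteq> structures (gen_subring ((\<lambda>g. of_nat d * g) ` \<Gamma>)) R'"
proof -
  define \<Gamma>' where "\<Gamma>' = gen_subring ((\<lambda>g. of_nat d * g) ` \<Gamma>)"
  have \<Gamma>: "subring_set \<Gamma>" using assms(5) unfolding is_order_def by blast
  have mult_d_in_\<Gamma>': "of_nat d * x \<in> \<Gamma>'" if "x \<in> \<Gamma>" for x
    using subset_gen_subring that unfolding \<Gamma>'_def by blast
  have restrict_\<Gamma>': "restrict f \<Gamma>' \<in> ring_homs \<Gamma>' R'" if f: "f \<in> ring_homs \<Gamma> R" for f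
    unfolding \<Gamma>'_def
  proof (rule restrict_gen_subring_in_ring_homs[OF \<Gamma> assms(3) f])
    show "(\<lambda>g. of_nat d * g) ` \<Gamma> \<subseteq> \<Gamma>" using subring_set_of_nat_mult[OF \<Gamma>] by blast
    show "f ` (\<lambda>g. of_nat d * g) ` \<Gamma> \<subseteq> R'"
      using ring_homs_of_nat_mult[OF \<Gamma> f] ring_homs_in[OF f] assms(7) by auto
  qed
  show ?thesis
    unfolding structures_def \<Gamma>'_def[symmetric]
  proof (rule inj_quotient_of_reflecting[OF equiv_conj_rel[OF assms(2)] equiv_conj_rel[OF assms(3)]])
    show "(\<lambda>f. restrict f \<Gamma>') \<in> ring_homs \<Gamma> R \<rightarrow> ring_homs \<Gamma>' R'" using restrict_\<Gamma>' by blast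
  next
    show "(f, g) \<in> conj_rel \<Gamma> R"
      if "f \<in> ring_homs \<Gamma> R" "g \<in> ring_homs \<Gamma> R" "(restrict f \<Gamma>', restrict g \<Gamma>') \<in> conj_rel \<Gamma>' R'"
      for f g
      using conj_rel_of_conj_rel_restrict[OF assms(1) _ \<Gamma> assms(8) mult_d_in_\<Gamma>'] that assms(6)
      by simp
  qed
qed

end
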